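(* Let $s,b\ge1$ be integers, $y>0$, and $f(x)=1-x-byx^{s+1}$. Then (1) $f$ has no repeated roots, and (2) $f$ has a positive root $\lambda_1(y)$ whose modulus is smaller than the modulus of every other root of $f$; moreover $\lambda_1(y)<1$. *)

theory Defs
  imports "HOL-Computational_Algebra.Polynomial"
begin

definition fpoly :: "nat \<Rightarrow> nat \<Rightarrow> real \<Rightarrow> complex poly" where
  "fpoly s b y = [:1, -1:] - monom (complex_of_real (real b * y)) (s + 1)"

end

theory Submission
  imports Defs
begin

text \<open>
  Write \<open>c = b y\<close>. A double root \<open>z\<close> would satisfy \<open>f z = f' z = 0\<close>, which forces
  \<open>z = (s+1)/s\<close>, a positive real at which \<open>f' z = -1 - (s+1) c z^s < 0\<close>. The intermediate
  value theorem gives a root \<open>\<lambda> \<in> (0,1)\<close>, since \<open>f 0 = 1\<close> and \<open>f 1 = -c\<close>. If \<open>z\<close> is any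
  root with \<open>|z| \<le> \<lambda>\<close>, then \<open>z + c z^(s+1) = 1\<close> with \<open>|z| \<le> \<lambda>\<close> and
  \<open>|c z^(s+1)| \<le> c \<lambda>^(s+1) = 1 - \<lambda>\<close>; equality in the triangle inequality forces \<open>z = \<lambda>\<close>.
\<close>

lemma poly_fpoly:
  "poly (fpoly s b y) z = 1 - z - complex_of_real (real b * y) * z ^ (s + 1)"
  by (simp add: fpoly_def poly_monom)

lemma poly_pderiv_fpoly:
  "poly (pderiv (fpoly s b y)) z = - 1 - of_nat (s + 1) * complex_of_real (real b * y) * z ^ s"
  by (simp add: fpoly_def pderiv_diff pderiv_monom pderiv_pCons poly_monom)

lemma complex_eq_of_real_if_sum_eq_1:
  fixes z w :: complex
  assumes "z + w = 1" and "norm z \<le> l" and "norm w \<le> 1 - l"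
  shows "z = of_real l"
proof -
  have "Re z + Re w = 1"
    using assms(1) by (metis plus_complex.sel(1) one_complex.sel(1))
  moreover have "Re z \<le> norm z" "Re w \<le> norm w"
    by (simp_all add: complex_Re_le_cmod)
  ultimately have "Re z = norm z" "Re z = l"
    using assms(2,3) by linarith+
  then have "Im z = 0"
    by (intro Im_eq_0) simp
  with \<open>Re z = l\<close> show ?thesis
    by (simp add: complex_eq_iff)
qed

lemma rsquarefree_fpoly:
  assumes "y \<ge> 0"
  shows "rsquarefree (fpoly s b y)"
  unfolding rsquarefree_roots
proof (intro allI notI)
  fix z
  define c where "c = real b * y"
  have "c \<ge> 0"
    using assms by (simp add: c_def)
  assume "poly (fpoly s b y) z = 0 \<and> poly (pderiv (fpoly s b y)) z = 0"
  then have "1 - z - of_real c * z ^ (s + 1) = 0" and "- 1 - of_nat (s + 1) * of_real c * z ^ s = 0"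
    by (simp_all only: poly_fpoly poly_pderiv_fpoly c_def)
  then have f: "of_real c * z ^ (s + 1) = 1 - z" and df: "of_nat (s + 1) * of_real c * z ^ s = - 1"
    by (simp_all add: eq_neg_iff_add_eq_0 add.commute)
  have "z + of_nat (s + 1) * (of_real c * z ^ (s + 1)) = z * (1 + of_nat (s + 1) * of_real c * z ^ s)"
    by (simp add: algebra_simps)
  with f df have "z + of_nat (s + 1) * (1 - z) = 0"
    by simp
  then have "z * of_nat s = of_nat (s + 1)"
    by (simp add: algebra_simps)
  moreover have "s \<noteq> 0"
    using calculation by (intro notI) simp
  ultimately have z: "z = of_real ((s + 1) / s)"
    by (simp add: field_simps)
  have "0 \<le> real (s + 1) * c * ((s + 1) / s) ^ s"
    using \<open>c \<ge> 0\<close> by simp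
  moreover have "complex_of_real (real (s + 1) * c * ((s + 1) / s) ^ s) = - 1"
    using df unfolding z by simp
  ultimately show False
    by (metis of_real_eq_iff of_real_minus of_real_1 neg_0_le_iff_le not_one_le_zero)
qed

lemma fpoly_has_root_in_unit_interval:
  assumes "b \<ge> 1" and "y > 0"
  obtains l :: real where "0 < l" "l < 1" "poly (fpoly s b y) (of_real l) = 0"
proof -
  define c where "c = real b * y"
  have "c > 0"
    using assms by (simp add: c_def)
  define g where "g x = 1 - x - c * x ^ (s + 1)" for x :: real
  have "continuous_on {0..1} g"
    unfolding g_def by (intro continuous_intros)
  then obtain l where l: "0 \<le> l" "l \<le> 1" "g l = 0"
    using IVT2'[of g 1 0 0] \<open>c > 0\<close> by (auto simp: g_def)
  have "l \<noteq> 0" "l \<noteq> 1"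
    using l(3) \<open>c > 0\<close> by (auto simp: g_def)
  moreover have "poly (fpoly s b y) (of_real l) = of_real (g l)"
    by (simp add: poly_fpoly g_def c_def)
  ultimately show ?thesis
    using that l by (simp add: less_le)
qed

lemma fpoly_root_of_minimal_norm:
  assumes "y \<ge> 0" and "l \<ge> 0"
    and "poly (fpoly s b y) (of_real l) = 0" and "poly (fpoly s b y) z = 0"
    and "norm z \<le> l"
  shows "z = of_real l"
proof (rule complex_eq_of_real_if_sum_eq_1)
  define c where "c = real b * y"
  have "c \<ge> 0"
    using assms(1) by (simp add: c_def)
  have "complex_of_real (c * l ^ (s + 1)) = of_real (1 - l)"
    using assms(3) by (simp add: poly_fpoly c_def)
  then have root: "c * l ^ (s + 1) = 1 - l"
    by (simp only: of_real_eq_iff)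
  show "z + of_real c * z ^ (s + 1) = 1"
    using assms(4) by (simp add: poly_fpoly c_def algebra_simps)
  have "norm (of_real c * z ^ (s + 1)) = c * norm z ^ (s + 1)"
    using \<open>c \<ge> 0\<close> by (simp add: norm_mult norm_power)
  also have "\<dots> \<le> c * l ^ (s + 1)"
    using \<open>c \<ge> 0\<close> assms(5) by (intro mult_left_mono power_mono) auto
  finally show "norm (of_real c * z ^ (s + 1)) \<le> 1 - l"
    using root by simp
  show "norm z \<le> l"
    by (fact assms(5))
qed

theorem lemma2p15:
  fixes s b :: nat and y :: real
  assumes "s \<ge> 1" and "b \<ge> 1" and "y > 0"
  shows "rsquarefree (fpoly s b y) \<and>
         (\<exists>l1::real. l1 > 0 \<and> l1 < 1 \<and> poly (fpoly s b y) (complex_of_real l1) = 0 \<and>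
            (\<forall>z. poly (fpoly s b y) z = 0 \<and> z \<noteq> complex_of_real l1 \<longrightarrow> l1 < norm z))"
proof -
  obtain l where l: "0 < l" "l < 1" "poly (fpoly s b y) (of_real l) = 0"
    using fpoly_has_root_in_unit_interval assms(2,3) by blast
  have "l < norm z" if "poly (fpoly s b y) z = 0" "z \<noteq> of_real l" for z
    using fpoly_root_of_minimal_norm[of y l s b z] that l assms(3) by fastforce
  then show ?thesis
    using rsquarefree_fpoly[of y s b] assms(3) l by auto
qed

end
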